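(* Let $n,d\in\mathbb{N}$ and let $k\geq 3$ be an integer such that $m=nd/k\in\mathbb{N}$ and $\binom{m}{2}<\binom{n}{k}$. Then \[\mathbb{P}_{\pi_{\mathcal{B}}}\big(\mathcal{B}^*(n,d,k)\big)\geq 1-\binom{m}{2}\binom{n}{k}^{-1}.\] Consequently, if $\mathcal{A}$ is an algorithm sampling from $\mathcal{B}(n,d,k)$ with output distribution $\sigma_{\mathcal{B}}$ satisfying $d_{TV}(\sigma_{\mathcal{B}},\pi_{\mathcal{B}})\leq\varepsilon$ for some $\varepsilon\in(0,1)$, and $\binom{m}{2}\leq c_0\binom{n}{k}$ for some $c_0\in(0,1-\varepsilon)$, then the output distribution $\sigma_{\mathcal{H}}$ of \textsc{HypergraphSampling}$((d,\dots,d),k,\mathcal{A})$ satisfies $d_{TV}(\sigma_{\mathcal{H}},\pi_{\mathcal{H}})\leq \frac{3\varepsilon}{2(1-c_0)}$, and its expected runtime is at most $(1-c_0-\varepsilon)^{-1}(\tau+\rho)$, where $\tau$ is the (expected) runtime of $\mathcal{A}$ and $\rho$ is the runtime of the H-simplicity test.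
   Context: $\mathcal{B}(n,d,k)$ denotes the set of simple bipartite graphs with fixed bipartition $X=\{x_1,\dots,x_n\}$, $Y=\{y_1,\dots,y_m\}$ in which every node of $X$ has degree $d$ and every node of $Y$ has degree $k$. $B$ is H-simple if distinct nodes of $Y$ have distinct neighbourhoods; $\mathcal{B}^*(n,d,k)$ is the set of H-simple elements of $\mathcal{B}(n,d,k)$, and $\pi_{\mathcal{B}}$ is the uniform distribution on $\mathcal{B}(n,d,k)$. For an H-simple $B$, $\varphi(B)$ is the simple $k$-uniform hypergraph on $X$ with edge set $\{\mathcal{N}_B(y):y\in Y\}$; $\pi_{\mathcal{H}}$ is the uniform distribution on the set of simple $k$-uniform $d$-regular hypergraphs on $X$. \textsc{HypergraphSampling}$(\boldsymbol{d},k,\mathcal{A})$ repeatedly samples $B$ using $\mathcal{A}$ until $B$ is H-simple, then outputs $\varphi(B)$; the H-simplicity test also constructs $\varphi(B)$. $d_{TV}$ is total variation distance. *)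

theory Defs
  imports "HOL-Probability.Probability"
begin

text \<open>Bipartite graphs with fixed bipartition X = {0..<n}, Y = {0..<m} are represented by
  their edge sets, i.e. sets of pairs (x, y) with x < n and y < m.\<close>

type_synonym bigraph = "(nat \<times> nat) set"
type_synonym hypergraph = "nat set set"

definition nbhd :: "bigraph \<Rightarrow> nat \<Rightarrow> nat set" where
  "nbhd B y = {x. (x, y) \<in> B}"

text \<open>The set B(n,d,k); here m = nd/k (the caller assumes k divides nd).\<close>
definition bip_set :: "nat \<Rightarrow> nat \<Rightarrow> nat \<Rightarrow> bigraph set" where
  "bip_set n d k = (let m = n * d div k in
     {B. B \<subseteq> {..<n} \<times> {..<m} \<and>
         (\<forall>x<n. card {y. (x, y) \<in> B} = d) \<and>
         (\<forall>y<m. card {x. (x, y) \<in> B} = k)})"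

definition H_simple :: "nat \<Rightarrow> bigraph \<Rightarrow> bool" where
  "H_simple m B \<longleftrightarrow> (\<forall>y1<m. \<forall>y2<m. y1 \<noteq> y2 \<longrightarrow> nbhd B y1 \<noteq> nbhd B y2)"

definition bip_star :: "nat \<Rightarrow> nat \<Rightarrow> nat \<Rightarrow> bigraph set" where
  "bip_star n d k = {B \<in> bip_set n d k. H_simple (n * d div k) B}"

definition phi :: "nat \<Rightarrow> bigraph \<Rightarrow> hypergraph" where
  "phi m B = nbhd B ` {..<m}"

definition hyp_set :: "nat \<Rightarrow> nat \<Rightarrow> nat \<Rightarrow> hypergraph set" where
  "hyp_set n d k = {H. (\<forall>e\<in>H. e \<subseteq> {..<n} \<and> card e = k) \<and>
                        (\<forall>x<n. card {e\<in>H. x \<in> e} = d)}"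

definition pi_B :: "nat \<Rightarrow> nat \<Rightarrow> nat \<Rightarrow> bigraph pmf" where
  "pi_B n d k = pmf_of_set (bip_set n d k)"

definition pi_H :: "nat \<Rightarrow> nat \<Rightarrow> nat \<Rightarrow> hypergraph pmf" where
  "pi_H n d k = pmf_of_set (hyp_set n d k)"

definition dTV :: "'a pmf \<Rightarrow> 'a pmf \<Rightarrow> real" where
  "dTV p q = (SUP A. \<bar>measure_pmf.prob p A - measure_pmf.prob q A\<bar>)"

text \<open>Output distribution of HypergraphSampling((d,...,d),k,A) when A has output
  distribution sigma: repeat sampling B ~ sigma until B is H-simple, output phi(B).\<close>
definition hs_output :: "nat \<Rightarrow> nat \<Rightarrow> nat \<Rightarrow> bigraph pmf \<Rightarrow> hypergraph pmf" where
  "hs_output n d k \<sigma> = map_pmf (phi (n * d div k)) (cond_pmf \<sigma> (bip_star n d k))"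

text \<open>Expected runtime of HypergraphSampling: each round costs tau (run of A) plus rho
  (H-simplicity test, which also builds phi(B)); the rounds are i.i.d., each succeeding with
  probability p = sigma(B*), so the number of rounds is 1 + G with G ~ geometric_pmf p
  (number of failures before the first success).\<close>
definition hs_runtime :: "nat \<Rightarrow> nat \<Rightarrow> nat \<Rightarrow> bigraph pmf \<Rightarrow> real \<Rightarrow> real \<Rightarrow> real" where
  "hs_runtime n d k \<sigma> \<tau> \<rho> =
     measure_pmf.expectation (geometric_pmf (measure_pmf.prob \<sigma> (bip_star n d k)))
       (\<lambda>N. real (N + 1) * (\<tau> + \<rho>))"

end

(* Let y1 \<noteq> y2 be nodes of Y. For k-sets S, T, replacing an element a \<in> S \<inter> T of T by
   some b \<notin> S \<union> T never decreases the number of graphs with N(y1) = S and N(y2) = T; this is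
   a switching argument with weights. Hence T = S is the least likely of the C(n,k) values
   of N(y2) given N(y1) = S, so P(N(y1) = N(y2)) \<le> 1/C(n,k), and the union bound over the
   C(m,2) pairs gives the first claim.
   An H-simple graph is a simple hypergraph together with an ordering of its m edges, so
   phi maps B* onto the simple hypergraphs with all fibres of size m!, and pi_H is pi_B
   conditioned on B* and pushed forward along phi. Conditioning on an event of probability
   at least 1 - c0 inflates a total variation distance \<epsilon> to at most 3 \<epsilon> / (2 (1 - c0)),
   and each round of rejection sampling succeeds with probability at least 1 - c0 - \<epsilon>. *)

theory Submission
  imports Defs "HOL-Combinatorics.Multiset_Permutations"
begin

section \<open>Total variation, conditioning and geometric trials\<close>

lemma prob_diff_le_dTV:
  "\<bar>measure_pmf.prob p A - measure_pmf.prob q A\<bar> \<le> dTV p q"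
  unfolding dTV_def
proof (rule cSUP_upper)
  have "\<bar>measure_pmf.prob p B - measure_pmf.prob q B\<bar> \<le> 1" for B
    by (smt (verit) measure_nonneg measure_pmf.prob_le_1)
  then show "bdd_above (range (\<lambda>A. \<bar>measure_pmf.prob p A - measure_pmf.prob q A\<bar>))"
    by (intro bdd_aboveI[where M = 1]) auto
qed simp

lemma measure_cond_pmf:
  assumes "set_pmf p \<inter> A \<noteq> {}"
  shows "measure_pmf.prob (cond_pmf p A) E = measure_pmf.prob p (A \<inter> E) / measure_pmf.prob p A"
  using assms emeasure_measure_pmf_not_zero[OF assms]
  by (simp add: cond_pmf.rep_eq[OF assms] measure_pmf.emeasure_finite)

lemma abs_ratio_diff_le:
  fixes x y u v e p :: real
  assumes "0 \<le> x" "0 \<le> u" "0 \<le> y" "0 \<le> v"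
    and "\<bar>x - y\<bar> \<le> e" "\<bar>u - v\<bar> \<le> e" "\<bar>(x + u) - (y + v)\<bar> \<le> e"
    and "0 < x + u" "0 < p" "p \<le> y + v"
  shows "\<bar>x / (x + u) - y / (y + v)\<bar> \<le> 3 * e / (2 * p)"
proof -
  define S P where "S = x + u" and "P = y + v"
  have "0 < S" "0 < P" "p \<le> P" using assms unfolding S_def P_def by auto
  have x_diff: "x / S - y / P = (x - y) / P + (x / S) * ((P - S) / P)"
    and u_diff: "u / S - v / P = (u - v) / P + (u / S) * ((P - S) / P)"
    using \<open>0 < S\<close> \<open>0 < P\<close> by (simp_all add: field_simps)
  have "x / S + u / S = 1" "y / P + v / P = 1"
    using \<open>0 < S\<close> \<open>0 < P\<close> unfolding S_def P_def by (simp_all add: add_divide_distrib[symmetric])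
  \<comment> \<open>The two differences cancel, so each is half of the sum of their absolute values.\<close>
  then have "2 * \<bar>x / S - y / P\<bar> = \<bar>x / S - y / P\<bar> + \<bar>u / S - v / P\<bar>"
    by (smt (verit))
  also have "\<dots> \<le> (\<bar>x - y\<bar> / P + (x / S) * (\<bar>P - S\<bar> / P)) + (\<bar>u - v\<bar> / P + (u / S) * (\<bar>P - S\<bar> / P))"
    unfolding x_diff u_diff using \<open>0 < S\<close> \<open>0 < P\<close> assms(1,2)
    by (intro add_mono order.trans[OF abs_triangle_ineq]) (auto simp: abs_mult)
  also have "\<dots> = (\<bar>x - y\<bar> + \<bar>u - v\<bar>) / P + (x / S + u / S) * (\<bar>P - S\<bar> / P)"
    by (simp add: distrib_right add_divide_distrib)
  also have "\<dots> = (\<bar>x - y\<bar> + \<bar>u - v\<bar> + \<bar>P - S\<bar>) / P"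
    using \<open>x / S + u / S = 1\<close> by (simp add: add_divide_distrib)
  also have "\<dots> \<le> 3 * e / p"
    using assms(5-7) \<open>0 < P\<close> \<open>p \<le> P\<close> \<open>0 < p\<close> unfolding S_def P_def
    by (intro frac_le) (auto simp: abs_minus_commute)
  finally show ?thesis unfolding S_def P_def using \<open>0 < p\<close> by (simp add: field_simps)
qed

lemma dTV_map_cond_pmf_le:
  assumes tv: "dTV p q \<le> \<epsilon>" and "0 < measure_pmf.prob p A"
    and "0 < c" "c \<le> measure_pmf.prob q A"
  shows "dTV (map_pmf f (cond_pmf p A)) (map_pmf f (cond_pmf q A)) \<le> 3 * \<epsilon> / (2 * c)"
  unfolding dTV_def
proof (rule cSUP_least)
  fix F
  define E where "E = f -` F"
  have p_A: "set_pmf p \<inter> A \<noteq> {}" and q_A: "set_pmf q \<inter> A \<noteq> {}"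
    using assms measure_pmf_zero_iff[of p A] measure_pmf_zero_iff[of q A] by auto
  have prob_split: "measure_pmf.prob r A = measure_pmf.prob r (A \<inter> E) + measure_pmf.prob r (A - E)"
    for r :: "'a pmf"
    by (simp add: measure_pmf.finite_measure_Diff')
  have prob_close: "\<bar>measure_pmf.prob p B - measure_pmf.prob q B\<bar> \<le> \<epsilon>" for B
    using prob_diff_le_dTV[of p B q] tv by linarith
  have "\<bar>measure_pmf.prob p (A \<inter> E) / measure_pmf.prob p A
         - measure_pmf.prob q (A \<inter> E) / measure_pmf.prob q A\<bar> \<le> 3 * \<epsilon> / (2 * c)"
    using assms(2-4) prob_close[of A] prob_close[of "A \<inter> E"] prob_close[of "A - E"]
    unfolding prob_split[of p] prob_split[of q] by (intro abs_ratio_diff_le) simp_all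
  then show "\<bar>measure_pmf.prob (map_pmf f (cond_pmf p A)) F
              - measure_pmf.prob (map_pmf f (cond_pmf q A)) F\<bar> \<le> 3 * \<epsilon> / (2 * c)"
    by (simp add: measure_cond_pmf[OF p_A] measure_cond_pmf[OF q_A] E_def)
qed simp

lemma cond_pmf_of_set:
  assumes "finite A" "B \<subseteq> A" "B \<noteq> {}"
  shows "cond_pmf (pmf_of_set A) B = pmf_of_set B"
proof (rule pmf_eqI)
  fix x
  have "A \<noteq> {}" "finite B" using assms by (auto intro: finite_subset)
  then have "set_pmf (pmf_of_set A) \<inter> B \<noteq> {}" using assms by (simp add: Int_absorb1)
  then show "pmf (cond_pmf (pmf_of_set A) B) x = pmf (pmf_of_set B) x"
    using assms \<open>A \<noteq> {}\<close> \<open>finite B\<close>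
    by (auto simp: pmf_cond measure_pmf_of_set Int_absorb1 card_gt_0_iff)
qed

lemma map_pmf_of_set_uniform_fibres:
  assumes "finite A" "A \<noteq> {}" "f ` A = C" "\<And>z. z \<in> C \<Longrightarrow> card {x \<in> A. f x = z} = r"
  shows "map_pmf f (pmf_of_set A) = pmf_of_set C"
proof (rule pmf_eqI)
  fix z
  have "finite C" "C \<noteq> {}" using assms by auto
  have "card A = (\<Sum>w\<in>C. card {x \<in> A. f x = w})"
    using sum.group[OF \<open>finite A\<close> \<open>finite C\<close>, of f "\<lambda>_. 1::nat"] assms(3) by simp
  then have card_A: "card A = card C * r" using assms(4) by simp
  have "pmf (map_pmf f (pmf_of_set A)) z = card {x \<in> A. f x = z} / card A"
    using assms(1,2) by (simp add: pmf_map measure_pmf_of_set vimage_def Int_def)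
  also have "\<dots> = pmf (pmf_of_set C) z"
  proof (cases "z \<in> C")
    case True
    then have "0 < r" using card_A assms(1,2) by (metis card_0_eq mult_0_right neq0_conv)
    then show ?thesis using True card_A assms(4) \<open>finite C\<close> \<open>C \<noteq> {}\<close> by simp
  next
    case False
    then have "{x \<in> A. f x = z} = {}" using assms(3) by auto
    then show ?thesis using False \<open>finite C\<close> \<open>C \<noteq> {}\<close> by (simp only: card.empty) simp
  qed
  finally show "pmf (map_pmf f (pmf_of_set A)) z = pmf (pmf_of_set C) z" .
qed

lemma expectation_geometric_pmf_Suc:
  assumes "0 < p" "p \<le> 1"
  shows "measure_pmf.expectation (geometric_pmf p) (\<lambda>N. real (N + 1) * c) = c / p"
proof -
  have "measure_pmf.expectation (geometric_pmf p) (\<lambda>N. real (N + 1) * c)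
      = measure_pmf.expectation (geometric_pmf p) real * c + c"
    using integrable_real_geometric_pmf[of p] assms by (simp add: distrib_right)
  also have "\<dots> = (1 - p) / p * c + c"
    using expectation_geometric_pmf[of p] assms by simp
  also have "\<dots> = c / p"
    using assms by (simp add: field_simps)
  finally show ?thesis .
qed

section \<open>Counting lemmas\<close>

lemma card_insert_Diff_swap:
  "finite A \<Longrightarrow> a \<in> A \<Longrightarrow> b \<notin> A \<Longrightarrow> card (insert b (A - {a})) = card A"
  by (metis card_Suc_Diff1 card_insert_disjoint finite_Diff Diff_iff)

lemma card_le_card_by_weighted_injection:
  fixes w :: "'a \<Rightarrow> real" and h :: "'a \<times> 'b \<Rightarrow> 'a \<times> 'b"
  assumes "finite U" "finite V"
    and "\<And>B. B \<in> U \<Longrightarrow> finite (F B)" "\<And>B. B \<in> V \<Longrightarrow> finite (G B)"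
    and inj: "inj_on h (Sigma U F)" and maps: "h ` Sigma U F \<subseteq> Sigma V G"
    and weight: "\<And>z. z \<in> Sigma U F \<Longrightarrow> w (fst (h z)) = w (fst z)"
    and "\<And>B. B \<in> U \<Longrightarrow> card (F B) * w B = 1"
    and "\<And>B. B \<in> V \<Longrightarrow> 0 \<le> w B" "\<And>B. B \<in> V \<Longrightarrow> card (G B) * w B \<le> 1"
  shows "card U \<le> card V"
proof -
  have sum_Sigma: "(\<Sum>z\<in>Sigma A C. w (fst z)) = (\<Sum>B\<in>A. card (C B) * w B)"
    if "finite A" "\<And>B. B \<in> A \<Longrightarrow> finite (C B)" for A C
    using sum.Sigma[of A C "\<lambda>B y. w B"] that by (simp add: split_def)
  have "real (card U) = (\<Sum>B\<in>U. card (F B) * w B)"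
    using assms(8) by simp
  also have "\<dots> = (\<Sum>z\<in>Sigma U F. w (fst (h z)))"
    using sum_Sigma[of U F] assms(1,3) weight by simp
  also have "\<dots> = (\<Sum>z\<in>h ` Sigma U F. w (fst z))"
    by (simp add: sum.reindex[OF inj])
  also have "\<dots> \<le> (\<Sum>z\<in>Sigma V G. w (fst z))"
    using maps assms(2,4,9) by (intro sum_mono2) auto
  also have "\<dots> = (\<Sum>B\<in>V. card (G B) * w B)"
    using sum_Sigma[of V G] assms(2,4) by simp
  also have "\<dots> \<le> card V"
    using sum_mono[of V "\<lambda>B. card (G B) * w B" "\<lambda>_. 1"] assms(10) by simp
  finally show ?thesis by simp
qed

lemma card_row_image:
  assumes "inj_on f I"
  shows "card {y. (x, y) \<in> f ` I} = card {j \<in> I. fst (f j) = x}"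
proof -
  have "{y. (x, y) \<in> f ` I} = (\<lambda>j. snd (f j)) ` {j \<in> I. fst (f j) = x}"
    by (auto simp: image_iff prod_eq_iff)
  moreover have "inj_on (\<lambda>j. snd (f j)) {j \<in> I. fst (f j) = x}"
    using assms by (auto simp: inj_on_def prod_eq_iff)
  ultimately show ?thesis by (simp add: card_image)
qed

lemma card_column_image:
  assumes "inj_on f I"
  shows "card {x. (x, y) \<in> f ` I} = card {j \<in> I. snd (f j) = y}"
proof -
  have "{x. (x, y) \<in> f ` I} = (\<lambda>j. fst (f j)) ` {j \<in> I. snd (f j) = y}"
    by (auto simp: image_iff prod_eq_iff)
  moreover have "inj_on (\<lambda>j. fst (f j)) {j \<in> I. snd (f j) = y}"
    using assms by (auto simp: inj_on_def prod_eq_iff)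
  ultimately show ?thesis by (simp add: card_image)
qed

lemma inj_div_mod:
  fixes d m :: nat
  assumes "0 < d" "d \<le> m"
  shows "inj (\<lambda>j. (j div d, j mod m))"
proof (rule linorder_injI)
  fix i j :: nat
  assume "i < j"
  show "(i div d, i mod m) \<noteq> (j div d, j mod m)"
  proof
    assume eq: "(i div d, i mod m) = (j div d, j mod m)"
    then have "m dvd j - i" using mod_eq_dvd_iff_nat[of i j m] \<open>i < j\<close> by simp
    then have "m \<le> j - i" using \<open>i < j\<close> by (simp add: dvd_imp_le)
    have "j < d + i div d * d"
      using dividend_less_div_times[OF \<open>0 < d\<close>, of j] eq by simp
    then have "j < i + d" using div_times_less_eq_dividend[of i d] by linarith
    then show False using \<open>m \<le> j - i\<close> \<open>d \<le> m\<close> \<open>i < j\<close> by arith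
  qed
qed

lemma card_div_eq:
  fixes d :: nat
  assumes "0 < d" "x < n"
  shows "card {j \<in> {..<n * d}. j div d = x} = d"
proof -
  have div_iff: "j div d = x \<longleftrightarrow> x * d \<le> j \<and> j < Suc x * d" for j
  proof -
    have "x \<le> j div d \<longleftrightarrow> x * d \<le> j" "j div d < Suc x \<longleftrightarrow> j < Suc x * d"
      using assms(1) by (simp_all only: less_eq_div_iff_mult_less_eq div_less_iff_less_mult)
    then show ?thesis by linarith
  qed
  have "Suc x * d \<le> n * d" using assms(2) by (intro mult_le_mono1) simp
  then have "{j \<in> {..<n * d}. j div d = x} = {x * d..<Suc x * d}"
    unfolding div_iff using less_le_trans by auto
  then show ?thesis by simp
qed

lemma card_mod_eq:
  fixes m :: nat
  assumes "y < m"
  shows "card {j \<in> {..<k * m}. j mod m = y} = k"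
proof -
  have "{j \<in> {..<k * m}. j mod m = y} = (\<lambda>t. t * m + y) ` {..<k}"
  proof (intro set_eqI iffI)
    fix j assume "j \<in> {j \<in> {..<k * m}. j mod m = y}"
    then have "j = j div m * m + y" "j div m < k"
      using div_less_iff_less_mult[of m j k] assms by auto
    then show "j \<in> (\<lambda>t. t * m + y) ` {..<k}" by (metis image_eqI lessThan_iff)
  next
    fix j assume "j \<in> (\<lambda>t. t * m + y) ` {..<k}"
    then obtain t where "t < k" "j = t * m + y" by auto
    moreover have "t * m + y < Suc t * m" using assms by simp
    moreover have "Suc t * m \<le> k * m" using mult_le_mono1[of "Suc t" k m] \<open>t < k\<close> by simp
    ultimately show "j \<in> {j \<in> {..<k * m}. j mod m = y}" using assms by simp
  qed
  moreover have "inj_on (\<lambda>t. t * m + y) {..<k}"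
    using assms by (auto simp: inj_on_def)
  ultimately show ?thesis by (simp add: card_image)
qed

section \<open>Switchings\<close>

lemma bip_setD:
  assumes "B \<in> bip_set n d k"
  shows "B \<subseteq> {..<n} \<times> {..<n * d div k}"
    and "\<And>x. x < n \<Longrightarrow> card {y. (x, y) \<in> B} = d"
    and "\<And>y. y < n * d div k \<Longrightarrow> card {x. (x, y) \<in> B} = k"
  using assms unfolding bip_set_def Let_def by auto

lemma finite_bip_set: "finite (bip_set n d k)"
  by (rule finite_subset[of _ "Pow ({..<n} \<times> {..<n * d div k})"])
    (auto simp: bip_set_def Let_def)

lemma finite_bip_set_member: "B \<in> bip_set n d k \<Longrightarrow> finite B"
  by (rule finite_subset[OF bip_setD(1)]) auto

lemma bip_star_subset: "bip_star n d k \<subseteq> bip_set n d k"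
  unfolding bip_star_def by blast

lemma nbhd_in_k_subsets:
  "B \<in> bip_set n d k \<Longrightarrow> y < n * d div k \<Longrightarrow> nbhd B y \<in> {S. S \<subseteq> {..<n} \<and> card S = k}"
  using bip_setD[of B n d k] unfolding nbhd_def by blast

definition switch :: "nat \<Rightarrow> nat \<Rightarrow> nat \<Rightarrow> nat \<Rightarrow> bigraph \<Rightarrow> bigraph" where
  "switch p q u v B = (B - {(p, u), (q, v)}) \<union> {(q, u), (p, v)}"

lemma switch_switch:
  "(p, u) \<in> B \<Longrightarrow> (q, v) \<in> B \<Longrightarrow> (q, u) \<notin> B \<Longrightarrow> (p, v) \<notin> B \<Longrightarrow>
    switch q p u v (switch p q u v B) = B"
  unfolding switch_def by blast

lemma inj_on_switch:
  "inj_on (\<lambda>(B, y). (switch p q y v B, y))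
     {(B, y). (p, y) \<in> B \<and> (q, y) \<notin> B \<and> (q, v) \<in> B \<and> (p, v) \<notin> B}"
  by (rule inj_onI) (clarsimp, metis switch_switch)

lemma converse_switch: "(switch p q u v B)\<inverse> = switch u v p q (B\<inverse>)"
  unfolding switch_def by auto

lemma card_row_switch:
  assumes "finite B" "(p, u) \<in> B" "(q, u) \<notin> B" "(q, v) \<in> B" "(p, v) \<notin> B"
  shows "card {y. (x, y) \<in> switch p q u v B} = card {y. (x, y) \<in> B}"
proof -
  have fin: "finite {y. (z, y) \<in> B}" for z
    by (rule finite_subset[of _ "snd ` B"]) (use assms(1) in force)+
  have "u \<noteq> v" "p \<noteq> q" using assms by auto
  consider "x = p" | "x = q" | "x \<noteq> p" "x \<noteq> q" by blast
  then show ?thesis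
  proof cases
    case 1
    then have "{y. (x, y) \<in> switch p q u v B} = insert v ({y. (x, y) \<in> B} - {u})"
      using \<open>u \<noteq> v\<close> \<open>p \<noteq> q\<close> unfolding switch_def by auto
    then show ?thesis using card_insert_Diff_swap[OF fin] assms 1 by simp
  next
    case 2
    then have "{y. (x, y) \<in> switch p q u v B} = insert u ({y. (x, y) \<in> B} - {v})"
      using \<open>u \<noteq> v\<close> \<open>p \<noteq> q\<close> unfolding switch_def by auto
    then show ?thesis using card_insert_Diff_swap[OF fin] assms 2 by simp
  next
    case 3
    then have "{y. (x, y) \<in> switch p q u v B} = {y. (x, y) \<in> B}"
      unfolding switch_def by auto
    then show ?thesis by simp
  qed
qed

lemma switch_in_bip_set:
  assumes B: "B \<in> bip_set n d k"
    and "(p, u) \<in> B" "(q, u) \<notin> B" "(q, v) \<in> B" "(p, v) \<notin> B"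
  shows "switch p q u v B \<in> bip_set n d k"
proof -
  have "finite B" using B by (rule finite_bip_set_member)
  have "switch p q u v B \<subseteq> {..<n} \<times> {..<n * d div k}"
    using bip_setD(1)[OF B] assms(2,4) unfolding switch_def by auto
  moreover have "card {y. (x, y) \<in> switch p q u v B} = d" if "x < n" for x
    using card_row_switch[OF \<open>finite B\<close> assms(2-5)] bip_setD(2)[OF B that] by simp
  moreover have "card {x. (x, y) \<in> switch p q u v B} = k" if "y < n * d div k" for y
  proof -
    have "{x. (x, y) \<in> switch p q u v B} = {x. (y, x) \<in> switch u v p q (B\<inverse>)}"
      by (simp flip: converse_switch)
    then show ?thesis
      using card_row_switch[of "B\<inverse>" u p v q y] \<open>finite B\<close> assms(2-5) bip_setD(3)[OF B that]
      by simp
  qed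
  ultimately show ?thesis unfolding bip_set_def Let_def by simp
qed

definition nbhd_X :: "bigraph \<Rightarrow> nat \<Rightarrow> nat set" where
  "nbhd_X B x = {y. (x, y) \<in> B}"

lemma finite_nbhd_X: "B \<in> bip_set n d k \<Longrightarrow> finite (nbhd_X B x)"
  by (rule finite_subset[of _ "{..<n * d div k}"]) (auto simp: nbhd_X_def dest: bip_setD(1))

lemma card_nbhd_X_Diff:
  "B \<in> bip_set n d k \<Longrightarrow> x < n \<Longrightarrow>
    card (nbhd_X B x - nbhd_X B x') = d - card (nbhd_X B x \<inter> nbhd_X B x')"
  using card_Diff_subset_Int[of "nbhd_X B x" "nbhd_X B x'"] finite_nbhd_X bip_setD(2)
  by (simp add: nbhd_X_def)

lemma card_nbhd_X_Int_less:
  assumes "B \<in> bip_set n d k" "x < n" "y \<in> nbhd_X B x - nbhd_X B x'"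
  shows "card (nbhd_X B x \<inter> nbhd_X B x') < d"
proof -
  have "0 < card (nbhd_X B x - nbhd_X B x')"
    using assms finite_nbhd_X[OF assms(1), of x] by (auto simp: card_gt_0_iff)
  then show ?thesis using card_nbhd_X_Diff[OF assms(1,2), of x'] by simp
qed

lemma nbhd_X_switch:
  assumes "(p, u) \<in> B" "(q, u) \<notin> B" "(q, v) \<in> B" "(p, v) \<notin> B"
  shows "nbhd_X (switch p q u v B) q \<inter> nbhd_X (switch p q u v B) p = nbhd_X B q \<inter> nbhd_X B p"
    and "u \<in> nbhd_X (switch p q u v B) q - nbhd_X (switch p q u v B) p"
  using assms unfolding nbhd_X_def switch_def by auto

definition bip_with_nbhds ::
    "nat \<Rightarrow> nat \<Rightarrow> nat \<Rightarrow> nat \<Rightarrow> nat \<Rightarrow> nat set \<Rightarrow> nat set \<Rightarrow> bigraph set" where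
  "bip_with_nbhds n d k y1 y2 S T = {B \<in> bip_set n d k. nbhd B y1 = S \<and> nbhd B y2 = T}"

lemma switch_in_bip_with_nbhds:
  assumes "B \<in> bip_with_nbhds n d k y1 y2 S T"
    and "y1 \<noteq> y2" "a \<in> S" "a \<in> T" "b \<notin> T" "y \<in> nbhd_X B b - nbhd_X B a"
  shows "switch b a y y2 B \<in> bip_with_nbhds n d k y1 y2 S (insert b (T - {a}))"
    and "y \<in> nbhd_X (switch b a y y2 B) a - nbhd_X (switch b a y y2 B) b - {y1}"
    and "nbhd_X (switch b a y y2 B) a \<inter> nbhd_X (switch b a y y2 B) b = nbhd_X B a \<inter> nbhd_X B b"
proof -
  have "B \<in> bip_set n d k" "(a, y1) \<in> B" "(a, y2) \<in> B" "(b, y2) \<notin> B" "(b, y) \<in> B" "(a, y) \<notin> B"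
    and nbhds: "nbhd B y1 = S" "nbhd B y2 = T"
    using assms unfolding bip_with_nbhds_def nbhd_def nbhd_X_def by auto
  moreover have "y \<noteq> y1" "y \<noteq> y2" "a \<noteq> b"
    using calculation assms(5) by auto
  ultimately have "switch b a y y2 B \<in> bip_set n d k"
    and "nbhd (switch b a y y2 B) y1 = S" "nbhd (switch b a y y2 B) y2 = insert b (T - {a})"
    using \<open>y1 \<noteq> y2\<close> by (auto intro!: switch_in_bip_set) (auto simp: switch_def nbhd_def)
  then show "switch b a y y2 B \<in> bip_with_nbhds n d k y1 y2 S (insert b (T - {a}))"
    unfolding bip_with_nbhds_def by simp
  show "y \<in> nbhd_X (switch b a y y2 B) a - nbhd_X (switch b a y y2 B) b - {y1}"
    and "nbhd_X (switch b a y y2 B) a \<inter> nbhd_X (switch b a y y2 B) b = nbhd_X B a \<inter> nbhd_X B b"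
    using nbhd_X_switch[of b y B a y2] \<open>y \<noteq> y1\<close> \<open>(b, y) \<in> B\<close> \<open>(a, y) \<notin> B\<close>
      \<open>(a, y2) \<in> B\<close> \<open>(b, y2) \<notin> B\<close> by auto
qed

(* Switch b--y and a--y2 to a--y and b--y2. A graph on the left has exactly
   d - |N(a) \<inter> N(b)| admissible y, a graph on the right at most that many, and the
   switch preserves N(a) \<inter> N(b); weighting pairs by the inverse of this number
   counts every graph on the left once and every graph on the right at most once. *)
lemma card_bip_with_nbhds_le_exchange:
  assumes "y1 \<noteq> y2" "a \<in> S" "a \<in> T" "a < n" "b \<notin> S" "b \<notin> T" "b < n"
  shows "card (bip_with_nbhds n d k y1 y2 S T)
           \<le> card (bip_with_nbhds n d k y1 y2 S (insert b (T - {a})))"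
proof -
  let ?U = "bip_with_nbhds n d k y1 y2 S T"
  let ?V = "bip_with_nbhds n d k y1 y2 S (insert b (T - {a}))"
  define common where "common B = nbhd_X B a \<inter> nbhd_X B b" for B
  have in_bip: "B \<in> bip_set n d k" if "B \<in> ?U \<or> B \<in> ?V" for B
    using that unfolding bip_with_nbhds_def by auto
  have common_less: "card (common B) < d" if "B \<in> ?U \<or> B \<in> ?V" for B
  proof -
    have "y1 \<in> nbhd_X B a - nbhd_X B b"
      using that assms unfolding bip_with_nbhds_def nbhd_def nbhd_X_def by auto
    then show ?thesis
      using card_nbhd_X_Int_less[OF in_bip[OF that] \<open>a < n\<close>] unfolding common_def by blast
  qed
  show ?thesis
  proof (rule card_le_card_by_weighted_injection[where
        F = "\<lambda>B. nbhd_X B b - nbhd_X B a" and G = "\<lambda>B. nbhd_X B a - nbhd_X B b - {y1}"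
        and h = "\<lambda>(B, y). (switch b a y y2 B, y)" and w = "\<lambda>B. 1 / real (d - card (common B))"])
    show "finite ?U" "finite ?V"
      using finite_bip_set by (auto simp: bip_with_nbhds_def)
    show "finite (nbhd_X B b - nbhd_X B a)" if "B \<in> ?U" for B
      using finite_nbhd_X in_bip that by blast
    show "finite (nbhd_X B a - nbhd_X B b - {y1})" if "B \<in> ?V" for B
      using finite_nbhd_X in_bip that by blast
    show "inj_on (\<lambda>(B, y). (switch b a y y2 B, y)) (Sigma ?U (\<lambda>B. nbhd_X B b - nbhd_X B a))"
      by (rule inj_on_subset[OF inj_on_switch])
        (use assms in \<open>auto simp: bip_with_nbhds_def nbhd_def nbhd_X_def\<close>)
    show "(\<lambda>(B, y). (switch b a y y2 B, y)) ` Sigma ?U (\<lambda>B. nbhd_X B b - nbhd_X B a)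
        \<subseteq> Sigma ?V (\<lambda>B. nbhd_X B a - nbhd_X B b - {y1})"
      using switch_in_bip_with_nbhds(1,2) assms by fastforce
    show "1 / real (d - card (common (fst ((\<lambda>(B, y). (switch b a y y2 B, y)) z))))
        = 1 / real (d - card (common (fst z)))"
      if "z \<in> Sigma ?U (\<lambda>B. nbhd_X B b - nbhd_X B a)" for z
      using that switch_in_bip_with_nbhds(3) assms unfolding common_def by auto
    show "real (card (nbhd_X B b - nbhd_X B a)) * (1 / real (d - card (common B))) = 1"
      if "B \<in> ?U" for B
      using card_nbhd_X_Diff[OF in_bip \<open>b < n\<close>, of B a] common_less[of B] that
      by (simp add: common_def Int_commute of_nat_diff)
    show "real (card (nbhd_X B a - nbhd_X B b - {y1})) * (1 / real (d - card (common B))) \<le> 1"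
      if "B \<in> ?V" for B
    proof -
      have "card (nbhd_X B a - nbhd_X B b - {y1}) \<le> card (nbhd_X B a - nbhd_X B b)"
        using finite_nbhd_X[OF in_bip] that by (intro card_mono) auto
      also have "\<dots> = d - card (common B)"
        using card_nbhd_X_Diff[OF in_bip \<open>a < n\<close>, of B b] that unfolding common_def by simp
      finally show ?thesis using common_less[of B] that by (simp add: divide_simps)
    qed
  qed simp
qed

lemma card_bip_with_nbhds_diagonal_le:
  assumes "y1 \<noteq> y2" "S \<subseteq> {..<n}" "T \<subseteq> {..<n}" "card T = card S"
  shows "card (bip_with_nbhds n d k y1 y2 S S) \<le> card (bip_with_nbhds n d k y1 y2 S T)"
  using assms(3,4)
proof (induction "card (T - S)" arbitrary: T)
  case 0
  have "finite S" "finite T" using assms(2) 0 by (auto intro: finite_subset)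
  then have "T \<subseteq> S" using 0 by simp
  then have "T = S" using card_subset_eq[OF \<open>finite S\<close>] 0 by simp
  then show ?case by simp
next
  case (Suc j)
  have "finite S" "finite T" using assms(2) Suc by (auto intro: finite_subset)
  then have "card (S - T) = card (T - S)"
    using Suc.prems(2) by (simp add: card_Diff_subset_Int Int_commute)
  then have "S - T \<noteq> {}" "T - S \<noteq> {}" using Suc.hyps(2) by (metis card.empty Zero_not_Suc)+
  then obtain a b where a: "a \<in> S" "a \<notin> T" and b: "b \<in> T" "b \<notin> S" by blast
  define T' where "T' = insert a (T - {b})"
  have "T' - S = (T - S) - {b}" using a unfolding T'_def by auto
  then have "card (T' - S) = j" using Suc.hyps(2) b \<open>finite T\<close> by simp
  moreover have "T' \<subseteq> {..<n}" using Suc.prems a assms(2) unfolding T'_def by auto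
  moreover have "card T' = card S"
    using Suc.prems a b \<open>finite T\<close> card_insert_Diff_swap unfolding T'_def by metis
  ultimately have "card (bip_with_nbhds n d k y1 y2 S S) \<le> card (bip_with_nbhds n d k y1 y2 S T')"
    using Suc.hyps(1) by simp
  also have "\<dots> \<le> card (bip_with_nbhds n d k y1 y2 S (insert b (T' - {a})))"
    using a b assms Suc.prems unfolding T'_def by (intro card_bip_with_nbhds_le_exchange) auto
  also have "insert b (T' - {a}) = T"
    using a b unfolding T'_def by auto
  finally show ?case .
qed

section \<open>The probability of H-simplicity\<close>

lemma card_equal_nbhds_mult_le:
  assumes "y1 \<noteq> y2" "y1 < n * d div k" "y2 < n * d div k"
  shows "card {B \<in> bip_set n d k. nbhd B y1 = nbhd B y2} * (n choose k) \<le> card (bip_set n d k)"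
proof -
  let ?K = "{S. S \<subseteq> {..<n} \<and> card S = k}"
  let ?W = "bip_with_nbhds n d k y1 y2"
  let ?bad = "{B \<in> bip_set n d k. nbhd B y1 = nbhd B y2}"
  have "finite ?K" by (rule finite_subset[of _ "Pow {..<n}"]) auto
  have card_K: "card ?K = n choose k" using n_subsets[of "{..<n}" k] by simp
  have "(\<lambda>B. (nbhd B y1, nbhd B y2)) ` bip_set n d k \<subseteq> ?K \<times> ?K"
    using nbhd_in_k_subsets assms by blast
  from sum.group[OF finite_bip_set finite_cartesian_product[OF \<open>finite ?K\<close> \<open>finite ?K\<close>] this,
      where h = "\<lambda>_. 1::nat"]
  have "card (bip_set n d k)
      = (\<Sum>ST\<in>?K \<times> ?K. card {B \<in> bip_set n d k. (nbhd B y1, nbhd B y2) = ST})"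
    by simp
  also have "\<dots> = (\<Sum>S\<in>?K. \<Sum>T\<in>?K. card (?W S T))"
    unfolding sum.cartesian_product bip_with_nbhds_def by (auto simp: case_prod_beta intro!: sum.cong)
  finally have card_bip: "card (bip_set n d k) = (\<Sum>S\<in>?K. \<Sum>T\<in>?K. card (?W S T))" .
  have "(\<lambda>B. nbhd B y1) ` ?bad \<subseteq> ?K"
    using nbhd_in_k_subsets assms by blast
  from sum.group[OF _ \<open>finite ?K\<close> this, where h = "\<lambda>_. 1::nat"] finite_bip_set
  have "card ?bad = (\<Sum>S\<in>?K. card {B \<in> ?bad. nbhd B y1 = S})"
    by simp
  also have "\<dots> = (\<Sum>S\<in>?K. card (?W S S))"
    unfolding bip_with_nbhds_def by (intro sum.cong refl arg_cong[where f = card]) auto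
  finally have "card ?bad * (n choose k) = (\<Sum>S\<in>?K. \<Sum>T\<in>?K. card (?W S S))"
    by (simp add: card_K sum_distrib_left mult.commute)
  also have "\<dots> \<le> (\<Sum>S\<in>?K. \<Sum>T\<in>?K. card (?W S T))"
    using assms(1) by (intro sum_mono card_bip_with_nbhds_diagonal_le) auto
  finally show ?thesis unfolding card_bip .
qed

lemma card_not_H_simple_mult_le:
  "card (bip_set n d k - bip_star n d k) * (n choose k)
     \<le> (n * d div k choose 2) * card (bip_set n d k)"
proof -
  let ?Y2 = "{P. P \<subseteq> {..<n * d div k} \<and> card P = 2}"
  let ?bad = "\<lambda>P. {B \<in> bip_set n d k. \<not> inj_on (nbhd B) P}"
  have "finite ?Y2" by (rule finite_subset[of _ "Pow {..<n * d div k}"]) auto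
  have "bip_set n d k - bip_star n d k \<subseteq> (\<Union>P\<in>?Y2. ?bad P)"
  proof
    fix B assume "B \<in> bip_set n d k - bip_star n d k"
    then obtain y1 y2 where "y1 < n * d div k" "y2 < n * d div k" "y1 \<noteq> y2" "nbhd B y1 = nbhd B y2"
      and "B \<in> bip_set n d k" unfolding bip_star_def H_simple_def by auto
    then show "B \<in> (\<Union>P\<in>?Y2. ?bad P)"
      by (intro UN_I[of "{y1, y2}"]) auto
  qed
  then have "card (bip_set n d k - bip_star n d k) \<le> card (\<Union>P\<in>?Y2. ?bad P)"
    using finite_bip_set by (intro card_mono) auto
  also have "\<dots> \<le> (\<Sum>P\<in>?Y2. card (?bad P))"
    using \<open>finite ?Y2\<close> by (rule card_UN_le)
  finally have "card (bip_set n d k - bip_star n d k) * (n choose k)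
      \<le> (\<Sum>P\<in>?Y2. card (?bad P)) * (n choose k)"
    by (rule mult_right_mono) simp
  also have "\<dots> = (\<Sum>P\<in>?Y2. card (?bad P) * (n choose k))"
    by (simp add: sum_distrib_right)
  also have "\<dots> \<le> (\<Sum>P\<in>?Y2. card (bip_set n d k))"
  proof (intro sum_mono)
    fix P assume "P \<in> ?Y2"
    then obtain y1 y2 where "P = {y1, y2}" "y1 \<noteq> y2" and y12: "y1 < n * d div k" "y2 < n * d div k"
      by (auto simp: card_2_iff)
    then have "?bad P = {B \<in> bip_set n d k. nbhd B y1 = nbhd B y2}"
      by (auto simp: inj_on_def)
    then show "card (?bad P) * (n choose k) \<le> card (bip_set n d k)"
      using card_equal_nbhds_mult_le[of y1 y2 n d k] \<open>y1 \<noteq> y2\<close> y12 by simp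
  qed
  also have "\<dots> = (n * d div k choose 2) * card (bip_set n d k)"
    using n_subsets[of "{..<n * d div k}" 2] by simp
  finally show ?thesis .
qed

(* The witness joins x to the d consecutive residues x d, ..., x d + d - 1 modulo m. *)
lemma bip_set_nonempty:
  assumes "0 < k" "k \<le> n" "k dvd n * d"
  shows "bip_set n d k \<noteq> {}"
proof (cases "d = 0")
  case True
  then have "{} \<in> bip_set n d k" unfolding bip_set_def Let_def by simp
  then show ?thesis by blast
next
  case False
  define m where "m = n * d div k"
  have "n * d = k * m" using assms(3) unfolding m_def by simp
  then have "d \<le> m" using assms(1,2) by (metis mult_le_cancel2 nat_mult_le_cancel_disj)
  define f where "f j = (j div d, j mod m)" for j
  have inj: "inj_on f {..<n * d}"
    using inj_on_subset[OF inj_div_mod[of d m]] False \<open>d \<le> m\<close> unfolding f_def by blast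
  have "f ` {..<n * d} \<subseteq> {..<n} \<times> {..<m}"
    using \<open>d \<le> m\<close> False by (auto simp: f_def div_less_iff_less_mult)
  moreover have "card {y. (x, y) \<in> f ` {..<n * d}} = d" if "x < n" for x
    using card_row_image[OF inj, of x] card_div_eq[of d x n] False that by (simp add: f_def)
  moreover have "card {x. (x, y) \<in> f ` {..<n * d}} = k" if "y < m" for y
    using card_column_image[OF inj, of y] card_mod_eq[OF that, of k] \<open>n * d = k * m\<close>
    by (simp add: f_def)
  ultimately have "f ` {..<n * d} \<in> bip_set n d k"
    unfolding bip_set_def Let_def m_def by simp
  then show ?thesis by blast
qed

lemma measure_pi_B_bip_star:
  assumes "bip_set n d k \<noteq> {}"
  shows "measure_pmf.prob (pi_B n d k) (bip_star n d k)
           = 1 - card (bip_set n d k - bip_star n d k) / card (bip_set n d k)"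
proof -
  have "0 < card (bip_set n d k)" using assms finite_bip_set by (simp add: card_gt_0_iff)
  moreover have "card (bip_star n d k) = card (bip_set n d k) - card (bip_set n d k - bip_star n d k)"
    "card (bip_set n d k - bip_star n d k) \<le> card (bip_set n d k)"
    using card_Diff_subset[OF finite_subset[OF bip_star_subset finite_bip_set] bip_star_subset]
      card_mono[OF finite_bip_set bip_star_subset] by auto
  ultimately show ?thesis
    using assms finite_bip_set bip_star_subset
    by (simp add: pi_B_def measure_pmf_of_set Int_absorb1 of_nat_diff field_simps)
qed

lemma measure_pi_B_bip_star_ge:
  assumes "bip_set n d k \<noteq> {}" "real (n * d div k choose 2) \<le> c * real (n choose k)" "0 \<le> c"
  shows "1 - c \<le> measure_pmf.prob (pi_B n d k) (bip_star n d k)"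
proof -
  let ?bad = "card (bip_set n d k - bip_star n d k)" and ?all = "card (bip_set n d k)"
  have "real ?bad \<le> c * real ?all"
  proof (cases "n choose k = 0")
    case True
    \<comment> \<open>Then there are fewer than two nodes in Y, and every graph is H-simple.\<close>
    then have "real (n * d div k choose 2) \<le> 0"
      using assms(2) by (simp only: of_nat_0 mult_zero_right)
    then have "n * d div k choose 2 = 0" by simp
    then have "bip_set n d k - bip_star n d k = {}"
      unfolding bip_star_def H_simple_def binomial_eq_0_iff by auto
    then show ?thesis using assms(3) by (simp only: card.empty of_nat_0) simp
  next
    case False
    have "real ?bad * real (n choose k) \<le> real (n * d div k choose 2) * real ?all"
      using card_not_H_simple_mult_le[of n d k] by (simp only: of_nat_mult[symmetric] of_nat_le_iff)
    also have "\<dots> \<le> c * real ?all * real (n choose k)"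
      using mult_right_mono[OF assms(2), of "real ?all"] by (simp add: ac_simps)
    finally show ?thesis using False by simp
  qed
  moreover have "0 < card (bip_set n d k)" using assms(1) finite_bip_set by (simp add: card_gt_0_iff)
  ultimately have "real ?bad / real ?all \<le> c" by (simp add: divide_le_eq)
  then show ?thesis using measure_pi_B_bip_star[OF assms(1)] by linarith
qed

lemma measure_pi_B_bip_star_ge_ratio:
  assumes "0 < k" "k dvd n * d" "real (n * d div k choose 2) < real (n choose k)"
  shows "1 - real (n * d div k choose 2) / real (n choose k)
           \<le> measure_pmf.prob (pi_B n d k) (bip_star n d k)"
proof (rule measure_pi_B_bip_star_ge)
  have "0 < n choose k" using assms(3) by linarith
  then show "bip_set n d k \<noteq> {}"
    using bip_set_nonempty[OF assms(1) _ assms(2)] by (simp add: binomial_eq_0_iff)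
  show "real (n * d div k choose 2)
      \<le> real (n * d div k choose 2) / real (n choose k) * real (n choose k)"
    using \<open>0 < n choose k\<close> by simp
qed simp

section \<open>Hypergraph sampling\<close>

lemma phi_in_hyp_set:
  assumes "B \<in> bip_star n d k"
  shows "phi (n * d div k) B \<in> hyp_set n d k"
proof -
  let ?m = "n * d div k"
  have B: "B \<in> bip_set n d k" and "inj_on (nbhd B) {..<?m}"
    using assms unfolding bip_star_def H_simple_def inj_on_def by auto
  have "e \<subseteq> {..<n} \<and> card e = k" if "e \<in> phi ?m B" for e
    using that nbhd_in_k_subsets[OF B] unfolding phi_def by auto
  moreover have "card {e \<in> phi ?m B. x \<in> e} = d" if "x < n" for x
  proof -
    have "{e \<in> phi ?m B. x \<in> e} = nbhd B ` {y \<in> {..<?m}. x \<in> nbhd B y}"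
      unfolding phi_def by auto
    moreover have "inj_on (nbhd B) {y \<in> {..<?m}. x \<in> nbhd B y}"
      using \<open>inj_on (nbhd B) {..<?m}\<close> by (rule inj_on_subset) auto
    moreover have "{y \<in> {..<?m}. x \<in> nbhd B y} = {y. (x, y) \<in> B}"
      using bip_setD(1)[OF B] unfolding nbhd_def by auto
    ultimately show ?thesis using bip_setD(2)[OF B that] by (simp add: card_image)
  qed
  ultimately show ?thesis unfolding hyp_set_def by blast
qed

lemma finite_hyp_set_member: "H \<in> hyp_set n d k \<Longrightarrow> finite H"
  by (rule finite_subset[of _ "Pow {..<n}"]) (auto simp: hyp_set_def)

lemma card_hyp_set_member:
  assumes "0 < k" "H \<in> hyp_set n d k"
  shows "card H = n * d div k"
proof -
  have "\<forall>e\<in>H. card {x \<in> {..<n}. x \<in> e} = k"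
  proof
    fix e assume "e \<in> H"
    then have "e \<subseteq> {..<n}" "card e = k" using assms(2) unfolding hyp_set_def by auto
    moreover from this(1) have "{x \<in> {..<n}. x \<in> e} = e" by auto
    ultimately show "card {x \<in> {..<n}. x \<in> e} = k" by simp
  qed
  then have "(\<Sum>x<n. card {e \<in> H. x \<in> e}) = k * card H"
    using finite_hyp_set_member[OF assms(2)] by (intro sum_multicount) auto
  moreover have "(\<Sum>x<n. card {e \<in> H. x \<in> e}) = n * d"
    using assms(2) unfolding hyp_set_def by simp
  ultimately show ?thesis using assms(1) by (metis nonzero_mult_div_cancel_left not_gr0)
qed

definition bigraph_of_list :: "nat set list \<Rightarrow> bigraph" where
  "bigraph_of_list es = {(x, y). y < length es \<and> x \<in> es ! y}"

lemma nbhd_bigraph_of_list: "y < length es \<Longrightarrow> nbhd (bigraph_of_list es) y = es ! y"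
  unfolding nbhd_def bigraph_of_list_def by auto

lemma bigraph_of_list_in_bip_set:
  assumes H: "H \<in> hyp_set n d k" and es: "es \<in> permutations_of_set H"
    and len: "length es = n * d div k"
  shows "bigraph_of_list es \<in> bip_set n d k"
proof -
  have "set es = H" "distinct es" using es unfolding permutations_of_set_def by auto
  have edge: "e \<subseteq> {..<n}" "card e = k" if "e \<in> H" for e
    using H that unfolding hyp_set_def by auto
  have "x < n" if "y < length es" "x \<in> es ! y" for x y
    using edge(1)[of "es ! y"] nth_mem[OF that(1)] that(2) \<open>set es = H\<close> by auto
  then have "bigraph_of_list es \<subseteq> {..<n} \<times> {..<n * d div k}"
    using len unfolding bigraph_of_list_def by auto
  moreover have "card {y. (x, y) \<in> bigraph_of_list es} = d" if "x < n" for x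
  proof -
    have "{e \<in> H. x \<in> e} = (!) es ` {y. (x, y) \<in> bigraph_of_list es}"
      using \<open>set es = H\<close> unfolding bigraph_of_list_def by (auto simp: in_set_conv_nth)
    moreover have "inj_on ((!) es) {y. (x, y) \<in> bigraph_of_list es}"
      using \<open>distinct es\<close> unfolding bigraph_of_list_def inj_on_def by (auto simp: nth_eq_iff_index_eq)
    ultimately have "card {e \<in> H. x \<in> e} = card {y. (x, y) \<in> bigraph_of_list es}"
      by (simp add: card_image)
    then show ?thesis using H that unfolding hyp_set_def by simp
  qed
  moreover have "card {x. (x, y) \<in> bigraph_of_list es} = k" if "y < n * d div k" for y
    using nbhd_bigraph_of_list[of y es] edge(2)[of "es ! y"] \<open>set es = H\<close> len that
    unfolding nbhd_def by auto
  ultimately show ?thesis unfolding bip_set_def Let_def by simp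
qed

lemma card_phi_fibre:
  assumes "0 < k" "H \<in> hyp_set n d k"
  shows "card {B \<in> bip_star n d k. phi (n * d div k) B = H} = fact (n * d div k)"
proof -
  let ?m = "n * d div k"
  let ?F = "{B \<in> bip_star n d k. phi ?m B = H}"
  have "finite H" "card H = ?m"
    using finite_hyp_set_member card_hyp_set_member assms by auto
  have "bij_betw (\<lambda>B. map (nbhd B) [0..<?m]) ?F (permutations_of_set H)"
  proof (rule bij_betw_byWitness[where f' = bigraph_of_list])
    show "\<forall>B\<in>?F. bigraph_of_list (map (nbhd B) [0..<?m]) = B"
      using bip_setD(1) unfolding bip_star_def bigraph_of_list_def nbhd_def by fastforce
    show "\<forall>es\<in>permutations_of_set H. map (nbhd (bigraph_of_list es)) [0..<?m] = es"
    proof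
      fix es assume "es \<in> permutations_of_set H"
      then have "length es = ?m"
        using distinct_card[of es] \<open>card H = ?m\<close> by (auto simp: permutations_of_set_def)
      then show "map (nbhd (bigraph_of_list es)) [0..<?m] = es"
        using nbhd_bigraph_of_list[of _ es] by (simp add: list_eq_iff_nth_eq)
    qed
    show "(\<lambda>B. map (nbhd B) [0..<?m]) ` ?F \<subseteq> permutations_of_set H"
      unfolding bip_star_def H_simple_def phi_def permutations_of_set_def
      by (auto simp: distinct_map inj_on_def atLeast0LessThan) blast
    show "bigraph_of_list ` permutations_of_set H \<subseteq> ?F"
    proof
      fix B assume "B \<in> bigraph_of_list ` permutations_of_set H"
      then obtain es where es: "es \<in> permutations_of_set H" "B = bigraph_of_list es" by blast
      then have "set es = H" "distinct es" "length es = ?m"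
        using distinct_card[of es] \<open>card H = ?m\<close> unfolding permutations_of_set_def by auto
      then have "H_simple ?m B" "phi ?m B = H"
        using nbhd_bigraph_of_list[of _ es] unfolding es(2) H_simple_def phi_def
        by (auto simp: nth_eq_iff_index_eq in_set_conv_nth image_iff)
      then show "B \<in> ?F"
        using bigraph_of_list_in_bip_set[OF assms(2) es(1)] \<open>length es = ?m\<close> es(2)
        unfolding bip_star_def by simp
    qed
  qed
  then show ?thesis
    using bij_betw_same_card \<open>finite H\<close> \<open>card H = ?m\<close> by fastforce
qed

lemma pi_H_eq_map_phi_cond_pi_B:
  assumes "0 < k" "bip_star n d k \<noteq> {}"
  shows "pi_H n d k = map_pmf (phi (n * d div k)) (cond_pmf (pi_B n d k) (bip_star n d k))"
proof -
  let ?m = "n * d div k"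
  have fibres: "card {B \<in> bip_star n d k. phi ?m B = H} = fact ?m" if "H \<in> hyp_set n d k" for H
    using card_phi_fibre[OF assms(1) that] .
  have "phi ?m ` bip_star n d k = hyp_set n d k"
  proof
    show "phi ?m ` bip_star n d k \<subseteq> hyp_set n d k" using phi_in_hyp_set by blast
    show "hyp_set n d k \<subseteq> phi ?m ` bip_star n d k"
    proof
      fix H assume "H \<in> hyp_set n d k"
      then have "{B \<in> bip_star n d k. phi ?m B = H} \<noteq> {}"
        using fibres[of H] by (intro notI) simp
      then show "H \<in> phi ?m ` bip_star n d k" by blast
    qed
  qed
  then have "map_pmf (phi ?m) (pmf_of_set (bip_star n d k)) = pmf_of_set (hyp_set n d k)"
    using finite_subset[OF bip_star_subset finite_bip_set] assms(2) fibres
    by (intro map_pmf_of_set_uniform_fibres)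
  then show ?thesis
    unfolding pi_H_def pi_B_def cond_pmf_of_set[OF finite_bip_set bip_star_subset assms(2)] by simp
qed

lemma hypergraph_sampling_guarantees:
  assumes "0 < k" "set_pmf \<sigma> \<subseteq> bip_set n d k" "dTV \<sigma> (pi_B n d k) \<le> \<epsilon>"
    and "0 < c0" "c0 < 1 - \<epsilon>" "real (n * d div k choose 2) \<le> c0 * real (n choose k)"
    and "0 \<le> \<tau>" "0 \<le> \<rho>"
  shows "set_pmf \<sigma> \<inter> bip_star n d k \<noteq> {}"
    and "dTV (hs_output n d k \<sigma>) (pi_H n d k) \<le> 3 * \<epsilon> / (2 * (1 - c0))"
    and "hs_runtime n d k \<sigma> \<tau> \<rho> \<le> (\<tau> + \<rho>) / (1 - c0 - \<epsilon>)"
proof -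
  let ?s = "measure_pmf.prob \<sigma> (bip_star n d k)"
  have "0 \<le> \<epsilon>" using prob_diff_le_dTV[of \<sigma> "{}" "pi_B n d k"] assms(3) by simp
  have "bip_set n d k \<noteq> {}" using assms(2) set_pmf_not_empty[of \<sigma>] by blast
  then have pi_B_star: "1 - c0 \<le> measure_pmf.prob (pi_B n d k) (bip_star n d k)"
    using assms(6) by (rule measure_pi_B_bip_star_ge) (use assms(4) in simp)
  then have "1 - c0 - \<epsilon> \<le> ?s"
    using prob_diff_le_dTV[of \<sigma> "bip_star n d k" "pi_B n d k"] assms(3) by linarith
  then have "0 < ?s" using assms(5) by linarith
  then show nonempty: "set_pmf \<sigma> \<inter> bip_star n d k \<noteq> {}"
    using measure_pmf_zero_iff[of \<sigma> "bip_star n d k"] by (metis less_irrefl)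
  then have "bip_star n d k \<noteq> {}" by blast
  show "dTV (hs_output n d k \<sigma>) (pi_H n d k) \<le> 3 * \<epsilon> / (2 * (1 - c0))"
    unfolding hs_output_def pi_H_eq_map_phi_cond_pi_B[OF assms(1) \<open>bip_star n d k \<noteq> {}\<close>]
    using assms(5) \<open>0 \<le> \<epsilon>\<close>
    by (intro dTV_map_cond_pmf_le[OF assms(3) \<open>0 < ?s\<close> _ pi_B_star]) simp
  have "hs_runtime n d k \<sigma> \<tau> \<rho> = (\<tau> + \<rho>) / ?s"
    unfolding hs_runtime_def using \<open>0 < ?s\<close> by (intro expectation_geometric_pmf_Suc) simp_all
  also have "\<dots> \<le> (\<tau> + \<rho>) / (1 - c0 - \<epsilon>)"
    using \<open>1 - c0 - \<epsilon> \<le> ?s\<close> assms(5,7,8) by (intro divide_left_mono mult_pos_pos) auto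
  finally show "hs_runtime n d k \<sigma> \<tau> \<rho> \<le> (\<tau> + \<rho>) / (1 - c0 - \<epsilon>)" .
qed

theorem theorem1p2:
  fixes n d k :: nat
  assumes k3: "k \<ge> 3"
    and dvd: "k dvd n * d"
  shows
    "(real (n * d div k choose 2) < real (n choose k) \<longrightarrow>
        measure_pmf.prob (pi_B n d k) (bip_star n d k)
          \<ge> 1 - real (n * d div k choose 2) / real (n choose k))
     \<and>
     (\<forall>(\<sigma> :: bigraph pmf) (\<epsilon> :: real) (c0 :: real) (\<tau> :: real) (\<rho> :: real).
        set_pmf \<sigma> \<subseteq> bip_set n d k \<and>
        dTV \<sigma> (pi_B n d k) \<le> \<epsilon> \<and> 0 < \<epsilon> \<and> \<epsilon> < 1 \<and>
        0 < c0 \<and> c0 < 1 - \<epsilon> \<and>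
        real (n * d div k choose 2) \<le> c0 * real (n choose k) \<and>
        0 \<le> \<tau> \<and> 0 \<le> \<rho>
      \<longrightarrow>
        set_pmf \<sigma> \<inter> bip_star n d k \<noteq> {} \<and>
        dTV (hs_output n d k \<sigma>) (pi_H n d k) \<le> 3 * \<epsilon> / (2 * (1 - c0)) \<and>
        hs_runtime n d k \<sigma> \<tau> \<rho> \<le> (\<tau> + \<rho>) / (1 - c0 - \<epsilon>))"
proof -
  have "0 < k" using k3 by simp \<comment> \<open>the argument only needs k > 0\<close>
  note guarantees = hypergraph_sampling_guarantees[OF this]
  show ?thesis
  proof (intro conjI impI allI; (elim conjE)?)
  qed (assumption | rule measure_pi_B_bip_star_ge_ratio[OF \<open>0 < k\<close> dvd] guarantees)+
qed

end
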